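(* Let $A$ and $B$ be commutative rings with identity and let $\phi: A\to B$ be a surjective ring homomorphism whose kernel is the principal ideal $\ker(\phi)=\langle \pi\rangle$ for some $\pi\in A$. If $I$ is an ideal of $A$ such that $\phi(I)$ is generated by $n$ elements, then there exist $a_1,a_2,\dots,a_n\in I$ such that $$I=\langle a_1,a_2,\dots,a_n\rangle+\pi(I:\pi).$$ In particular, if $B$ is Noetherian, then for every ideal $I$ of $A$ there exist a positive integer $n$ and elements $a_1,\dots,a_n\in I$ such that $I=\langle a_1,\dots,a_n\rangle+\pi(I:\pi)$.
   Context: For ideals $I,J$ of a commutative ring $R$, the ideal quotient is $(I:J)=\{x\in R: xJ\subseteq I\}$, and $(I:a)$ denotes $(I:\langle a\rangle)$. For an ideal $K$ and $\pi\in A$, $\pi K=\{\pi k: k\in K\}$. *)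

theory Defs
  imports "HOL-Algebra.Algebra"
begin

definition elem_ideal_quotient :: "('a, 'm) ring_scheme \<Rightarrow> 'a set \<Rightarrow> 'a \<Rightarrow> 'a set"
  where "elem_ideal_quotient R I a = {x \<in> carrier R. x \<otimes>\<^bsub>R\<^esub> a \<in> I}"

definition elem_times_set :: "('a, 'm) ring_scheme \<Rightarrow> 'a \<Rightarrow> 'a set \<Rightarrow> 'a set"
  where "elem_times_set R p K = {p \<otimes>\<^bsub>R\<^esub> k | k. k \<in> K}"

end

theory Submission
  imports Defs
begin

text \<open>
  Lift generators b_1, ..., b_n of \<phi>(I) to elements a_i \<in> I and put J = \<langle>a_1, ..., a_n\<rangle> \<subseteq> I.
  Since \<phi>(J) = \<phi>(I), every x \<in> I differs from some y \<in> J by an element of I \<inter> ker \<phi>,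
  so I = J + (I \<inter> \<langle>\<pi>\<rangle>); and an element k\<pi> of \<langle>\<pi>\<rangle> lies in I exactly when k \<in> (I : \<pi>),
  i.e. I \<inter> \<langle>\<pi>\<rangle> = \<pi>(I : \<pi>). If B is Noetherian, \<phi>(I) is finitely generated.
\<close>

lemma (in ring_hom_ring) ideal_image_surj:
  assumes surj: "h ` carrier R = carrier S" and I: "ideal I R"
  shows "ideal (h ` I) S"
proof -
  interpret I: ideal I R by (rule I)
  show ?thesis
  proof (rule idealI[OF S.ring_axioms])
    show "subgroup (h ` I) (add_monoid S)"
      by (rule img_is_add_subgroup[OF I.a_subgroup])
  next
    fix a x assume "a \<in> h ` I" "x \<in> carrier S"
    then obtain y z where "y \<in> I" "a = h y" "z \<in> carrier R" "x = h z"
      using surj by (metis imageE)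
    then show "x \<otimes>\<^bsub>S\<^esub> a \<in> h ` I" "a \<otimes>\<^bsub>S\<^esub> x \<in> h ` I"
      using I.Icarr I.I_l_closed I.I_r_closed by (metis hom_mult image_eqI)+
  qed
qed

lemma (in ring_hom_ring) image_genideal_surj:
  assumes surj: "h ` carrier R = carrier S" and T: "T \<subseteq> carrier R"
  shows "h ` (Idl T) = Idl\<^bsub>S\<^esub> (h ` T)"
proof
  have "h ` T \<subseteq> Idl\<^bsub>S\<^esub> (h ` T)"
    using T by (intro S.genideal_self) auto
  then have "Idl T \<subseteq> {r \<in> carrier R. h r \<in> Idl\<^bsub>S\<^esub> (h ` T)}"
    using T by (intro R.genideal_minimal ideal_vimage S.genideal_ideal) auto
  then show "h ` (Idl T) \<subseteq> Idl\<^bsub>S\<^esub> (h ` T)" by blast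
  show "Idl\<^bsub>S\<^esub> (h ` T) \<subseteq> h ` (Idl T)"
    using T R.genideal_self
    by (intro S.genideal_minimal ideal_image_surj[OF surj] R.genideal_ideal) auto
qed

lemma (in ring_hom_ring) ideal_eq_set_add_inter_kernel:
  assumes I: "ideal I R" and "J \<subseteq> I" and "h ` I \<subseteq> h ` J"
  shows "I = J <+>\<^bsub>R\<^esub> (I \<inter> a_kernel R S h)"
proof
  interpret I: ideal I R by (rule I)
  show "I \<subseteq> J <+>\<^bsub>R\<^esub> (I \<inter> a_kernel R S h)"
  proof
    fix x assume x: "x \<in> I"
    then obtain y where y: "y \<in> J" "h y = h x"
      using \<open>h ` I \<subseteq> h ` J\<close> by (metis imageE image_eqI subsetD)
    have carr: "x \<in> carrier R" "y \<in> carrier R"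
      using x y(1) \<open>J \<subseteq> I\<close> I.Icarr by auto
    have "h (x \<ominus>\<^bsub>R\<^esub> y) = \<zero>\<^bsub>S\<^esub>"
      using carr y(2) by (simp add: hom_a_inv a_minus_def S.r_neg)
    moreover have "x \<ominus>\<^bsub>R\<^esub> y \<in> I"
      using x y(1) \<open>J \<subseteq> I\<close> unfolding a_minus_def by (blast intro: I.a_closed I.a_inv_closed)
    ultimately have "x \<ominus>\<^bsub>R\<^esub> y \<in> I \<inter> a_kernel R S h"
      using carr unfolding a_kernel_def' by auto
    moreover have "x = y \<oplus>\<^bsub>R\<^esub> (x \<ominus>\<^bsub>R\<^esub> y)"
      using carr by algebra
    ultimately show "x \<in> J <+>\<^bsub>R\<^esub> (I \<inter> a_kernel R S h)"
      using y(1) unfolding set_add_def' by blast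
  qed
  show "J <+>\<^bsub>R\<^esub> (I \<inter> a_kernel R S h) \<subseteq> I"
    using \<open>J \<subseteq> I\<close> unfolding set_add_def' by (auto intro: I.a_closed)
qed

lemma (in cring) inter_cgenideal_eq_elem_times_set:
  assumes p: "p \<in> carrier R"
  shows "I \<inter> PIdl p = elem_times_set R p (elem_ideal_quotient R I p)"
  using p m_comm
  unfolding cgenideal_def elem_times_set_def elem_ideal_quotient_def by auto

lemma (in noetherian_ring) ideal_eq_genideal_range:
  assumes I: "ideal I R"
  obtains n :: nat and b where "n > 0" "\<forall>i<n. b i \<in> carrier R" "I = Idl (b ` {..<n})"
proof -
  interpret I: ideal I R by (rule I)
  obtain T where T: "T \<subseteq> carrier R" "finite T" "I = Idl T"
    using finetely_gen[OF I] by blast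
  \<comment> \<open>adjoining \<zero> makes the generating set nonempty without changing the ideal\<close>
  define T' where "T' = insert \<zero> T"
  have "I = Idl T'"
  proof
    show "I \<subseteq> Idl T'"
      unfolding T(3) T'_def by (rule subset_Idl_subset) (use T in auto)
    show "Idl T' \<subseteq> I"
      using T genideal_self I.zero_closed
      by (intro genideal_minimal[OF I]) (auto simp: T'_def)
  qed
  moreover obtain b where "b ` {..<card T'} = T'"
    using T ex_bij_betw_nat_finite[of T'] unfolding T'_def bij_betw_def lessThan_atLeast0
    by auto
  moreover have "card T' > 0"
    using T by (simp add: T'_def card_gt_0_iff)
  moreover have "T' \<subseteq> carrier R"
    using T by (simp add: T'_def)
  ultimately show ?thesis
    by (intro that[of "card T'" b]) force+
qed

lemma (in ring_hom_cring) ideal_eq_genideal_add_principal_kernel: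
  assumes surj: "h ` carrier R = carrier S"
    and p: "p \<in> carrier R" and ker: "a_kernel R S h = PIdl p"
    and I: "ideal I R"
    and b: "\<forall>i<n. b i \<in> carrier S" and hI: "h ` I = Idl\<^bsub>S\<^esub> (b ` {..<n})"
  shows "\<exists>a. (\<forall>i<n. a i \<in> I) \<and>
           I = Idl (a ` {..<n}) <+>\<^bsub>R\<^esub> elem_times_set R p (elem_ideal_quotient R I p)"
proof -
  interpret I: ideal I R by (rule I)
  have "b ` {..<n} \<subseteq> h ` I"
    unfolding hI using b by (intro S.genideal_self) auto
  then have "\<forall>i\<in>{..<n}. \<exists>x\<in>I. h x = b i"
    by (metis image_iff image_subset_iff)
  then obtain a where a: "\<forall>i\<in>{..<n}. a i \<in> I \<and> h (a i) = b i"
    by (metis (mono_tags) bchoice)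
  define J where "J = Idl (a ` {..<n})"
  have aI: "a ` {..<n} \<subseteq> I" using a by auto
  have "J \<subseteq> I" unfolding J_def by (rule R.genideal_minimal[OF I aI])
  have "h ` J = Idl\<^bsub>S\<^esub> (h ` a ` {..<n})"
    unfolding J_def using aI I.Icarr by (intro ring.image_genideal_surj[OF surj]) auto
  also have "h ` a ` {..<n} = b ` {..<n}"
    unfolding image_image by (rule image_cong) (use a in auto)
  finally have "h ` J = h ` I"
    unfolding hI .
  then have "I = J <+>\<^bsub>R\<^esub> (I \<inter> a_kernel R S h)"
    by (intro ring.ideal_eq_set_add_inter_kernel[OF I \<open>J \<subseteq> I\<close>]) simp
  then show ?thesis
    unfolding ker R.inter_cgenideal_eq_elem_times_set[OF p] J_def using a by auto
qed

theorem proposition2p1: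
  fixes A :: "('a, 'm) ring_scheme" and B :: "('b, 'n) ring_scheme"
    and \<phi> :: "'a \<Rightarrow> 'b" and \<pi> :: 'a
  assumes "cring A" and "cring B"
    and "\<phi> \<in> ring_hom A B" and "\<phi> ` carrier A = carrier B"
    and "\<pi> \<in> carrier A"
    and "a_kernel A B \<phi> = PIdl\<^bsub>A\<^esub> \<pi>"
  shows "(\<forall>I n. ideal I A \<longrightarrow>
            (\<exists>b :: nat \<Rightarrow> 'b. (\<forall>i<n. b i \<in> carrier B) \<and> \<phi> ` I = Idl\<^bsub>B\<^esub> (b ` {..<n})) \<longrightarrow>
            (\<exists>a :: nat \<Rightarrow> 'a. (\<forall>i<n. a i \<in> I) \<and>
               I = Idl\<^bsub>A\<^esub> (a ` {..<n}) <+>\<^bsub>A\<^esub> elem_times_set A \<pi> (elem_ideal_quotient A I \<pi>)))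
       \<and> (noetherian_ring B \<longrightarrow>
           (\<forall>I. ideal I A \<longrightarrow>
              (\<exists>n::nat. n > 0 \<and> (\<exists>a :: nat \<Rightarrow> 'a. (\<forall>i<n. a i \<in> I) \<and>
                 I = Idl\<^bsub>A\<^esub> (a ` {..<n}) <+>\<^bsub>A\<^esub> elem_times_set A \<pi> (elem_ideal_quotient A I \<pi>)))))"
proof -
  interpret ring_hom_cring A B \<phi>
    using assms(1-3) by (intro ring_hom_cringI)
  note decomposition = ideal_eq_genideal_add_principal_kernel[OF assms(4-6)]
  have noetherian_case:
    "\<exists>n::nat. n > 0 \<and> (\<exists>a. (\<forall>i<n. a i \<in> I) \<and>
       I = Idl\<^bsub>A\<^esub> (a ` {..<n}) <+>\<^bsub>A\<^esub> elem_times_set A \<pi> (elem_ideal_quotient A I \<pi>))"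
    if noetherian: "noetherian_ring B" and I: "ideal I A" for I
  proof -
    obtain n :: nat and b where n: "n > 0"
      and b: "\<forall>i<n. b i \<in> carrier B" "\<phi> ` I = Idl\<^bsub>B\<^esub> (b ` {..<n})"
      by (rule noetherian_ring.ideal_eq_genideal_range[OF noetherian ring.ideal_image_surj[OF assms(4) I]])
    show ?thesis
      using n decomposition[OF I b] by blast
  qed
  show ?thesis
    using decomposition noetherian_case by blast
qed

end
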